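(* Let $G(\mathcal V,\mathcal E)$ be a finite simple directed graph and $f\ge 0$ an integer, such that for every partition $X,Y,Z$ of $\mathcal V$ with $X,Y$ non-empty and $|Z|\le f$, either $X \Rightarrow_{\mathcal V - Z} Y$ or $Y \Rightarrow_{\mathcal V - Z} X$. Let $A,B,C,F$ be pairwise disjoint subsets of $\mathcal V$ with $|F|\le f$ and $A,B,C$ non-empty. If $A \Rightarrow_{\mathcal V - F} B$ and $A\cup B \Rightarrow_{\mathcal V - F} C$, then $A \Rightarrow_{\mathcal V - F} B\cup C$.
   Context: An $(X,y)$-path is a directed path from some node of $X$ to the node $y\notin X$; it excludes $F$ if it contains no node of $F$; $(X,y)$-paths are disjoint if they pairwise share only $y$. For pairwise disjoint $X,Y,F\subseteq\mathcal V$ with $|F|\le f$, $X \Rightarrow_{\mathcal V - F} Y$ means: $Y=\emptyset$, or every $y\in Y$ has at least $f+1$ pairwise disjoint $(X,y)$-paths excluding $F$. *)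

theory Defs
  imports Main
begin

definition simple_digraph :: "'a set \<Rightarrow> ('a \<times> 'a) set \<Rightarrow> bool" where
  "simple_digraph V E \<longleftrightarrow> finite V \<and> E \<subseteq> V \<times> V \<and> (\<forall>v. (v, v) \<notin> E)"

definition dpath :: "'a set \<Rightarrow> ('a \<times> 'a) set \<Rightarrow> 'a list \<Rightarrow> bool" where
  "dpath V E ps \<longleftrightarrow> ps \<noteq> [] \<and> distinct ps \<and> set ps \<subseteq> V \<and>
     (\<forall>i. Suc i < length ps \<longrightarrow> (ps ! i, ps ! Suc i) \<in> E)"

definition Xy_path :: "'a set \<Rightarrow> ('a \<times> 'a) set \<Rightarrow> 'a set \<Rightarrow> 'a \<Rightarrow> 'a list \<Rightarrow> bool" where
  "Xy_path V E X y ps \<longleftrightarrow> y \<notin> X \<and> dpath V E ps \<and> hd ps \<in> X \<and> last ps = y"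

definition reaches :: "'a set \<Rightarrow> ('a \<times> 'a) set \<Rightarrow> nat \<Rightarrow> 'a set \<Rightarrow> 'a set \<Rightarrow> 'a set \<Rightarrow> bool" where
  "reaches V E f F X Y \<longleftrightarrow> Y = {} \<or>
     (\<forall>y\<in>Y. \<exists>P. finite P \<and> f + 1 \<le> card P \<and>
        (\<forall>ps\<in>P. Xy_path V E X y ps \<and> set ps \<inter> F = {}) \<and>
        (\<forall>p\<in>P. \<forall>q\<in>P. p \<noteq> q \<longrightarrow> set p \<inter> set q = {y}))"

end

theory Submission
  imports Defs "HOL-Library.Disjoint_Sets"
begin

text \<open>For each c \<in> C we apply Menger's theorem between A and the in-neighbours of c,
  in the graph with F and c removed. A separator S with at most f vertices cannot exist: one of the
  f + 1 (A \<union> B, c)-paths avoids S - {c}; if it starts at b \<in> B, one of the f + 1 (A, b)-paths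
  avoids S, and concatenating the two gives a walk from A to c avoiding S - {c}.
  Menger's theorem itself is proved by induction on the number of edges: deleting an edge (x, y)
  either keeps all separators large, or leaves a small separator S for which S + x and S + y are
  minimum separators of the original graph, through which two linkages can be glued.\<close>

section \<open>Walks\<close>

definition walk :: "('a \<times> 'a) set \<Rightarrow> 'a list \<Rightarrow> bool" where
  "walk E p \<longleftrightarrow> p \<noteq> [] \<and> successively (\<lambda>u v. (u, v) \<in> E) p"

lemma walk_Cons_Cons: "walk E (u # v # p) \<longleftrightarrow> (u, v) \<in> E \<and> walk E (v # p)"
  by (simp add: walk_def)

lemma walk_mono: "walk E p \<Longrightarrow> E \<subseteq> E' \<Longrightarrow> walk E' p"
  unfolding walk_def by (auto elim: successively_mono)

lemma walk_prefix: "walk E (u @ v # w) \<Longrightarrow> walk E (u @ [v])"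
  by (auto simp: walk_def successively_append_iff)

lemma walk_suffix: "walk E (u @ v # w) \<Longrightarrow> walk E (v # w)"
  by (auto simp: walk_def successively_append_iff)

lemma walk_append: "walk E p \<Longrightarrow> walk E q \<Longrightarrow> (last p, hd q) \<in> E \<Longrightarrow> walk E (p @ q)"
  by (auto simp: walk_def successively_append_iff)

lemma walk_append_tl:
  assumes "walk E p" "walk E (v # w)" "last p = v"
  shows "walk E (p @ w)"
  using assms by (cases w) (auto simp: walk_def successively_append_iff)

lemma walk_set_subset: "walk E p \<Longrightarrow> set p \<subseteq> insert (hd p) (snd ` E)"
proof (induction p rule: induct_list012)
  case (3 u v p)
  then have "(u, v) \<in> E" and IH: "set (v # p) \<subseteq> insert v (snd ` E)"
    by (simp_all add: walk_Cons_Cons)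
  then have "v \<in> snd ` E" by (metis image_eqI snd_conv)
  then show ?case using IH by (simp add: subset_iff) blast
qed (auto simp: walk_def)

lemma walk_contains_path:
  assumes "walk E p"
  shows "\<exists>q. walk E q \<and> distinct q \<and> hd q = hd p \<and> last q = last p \<and> set q \<subseteq> set p"
  using assms
proof (induction p rule: induct_list012)
  case (2 u)
  then show ?case by auto
next
  case (3 u v p)
  then obtain q where q: "walk E q" "distinct q" "hd q = v" "last q = last (v # p)"
    "set q \<subseteq> set (v # p)"
    by (auto simp: walk_Cons_Cons)
  show ?case
  proof (cases "u \<in> set q")
    case True
    then obtain r w where q_split: "q = r @ u # w" by (meson split_list)
    have "walk E (u # w)" "distinct (u # w)"
      using q q_split walk_suffix[of E r u w] by simp_all
    moreover have "last (u # w) = last (u # v # p)" "set (u # w) \<subseteq> set (u # v # p)"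
      using q q_split by auto
    ultimately show ?thesis by (intro exI[of _ "u # w"]) simp
  next
    case False
    have "q \<noteq> []" using q(1) by (simp add: walk_def)
    then have "q = v # tl q" using q(3) by (cases q) auto
    then have "walk E (u # q)"
      using q(1) "3.prems" by (metis walk_Cons_Cons)
    moreover have "last (u # q) = last (u # v # p)" "set (u # q) \<subseteq> set (u # v # p)"
      using q \<open>q \<noteq> []\<close> by auto
    ultimately show ?thesis
      using q False by (intro exI[of _ "u # q"]) simp
  qed
qed (simp add: walk_def)

lemma walk_uses_removed_edge:
  assumes "walk E p" "\<not> walk (E - {(x, y)}) p"
  shows "\<exists>u w. p = u @ x # y # w"
  using assms
proof (induction p rule: induct_list012)
  case (3 a b p)
  show ?case
  proof (cases "(a, b) = (x, y)")
    case True
    then show ?thesis by auto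
  next
    case False
    then obtain u w where "b # p = u @ x # y # w"
      using "3.IH"(2) "3.prems" by (auto simp: walk_Cons_Cons)
    then show ?thesis by (metis append_Cons)
  qed
qed (auto simp: walk_def)

section \<open>Separators and linkages\<close>

definition path_between :: "('a \<times> 'a) set \<Rightarrow> 'a set \<Rightarrow> 'a set \<Rightarrow> 'a list \<Rightarrow> bool" where
  "path_between E A B p \<longleftrightarrow> walk E p \<and> distinct p \<and> hd p \<in> A \<and> last p \<in> B"

definition separates :: "('a \<times> 'a) set \<Rightarrow> 'a set \<Rightarrow> 'a set \<Rightarrow> 'a set \<Rightarrow> bool" where
  "separates E A B S \<longleftrightarrow> (\<forall>p. path_between E A B p \<longrightarrow> set p \<inter> S \<noteq> {})"

definition meets_only_at_ends :: "'a set \<Rightarrow> 'a set \<Rightarrow> 'a list \<Rightarrow> bool" where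
  "meets_only_at_ends A B p \<longleftrightarrow>
     (\<forall>v\<in>set p. v \<in> A \<longrightarrow> v = hd p) \<and> (\<forall>v\<in>set p. v \<in> B \<longrightarrow> v = last p)"

definition linkage :: "('a \<times> 'a) set \<Rightarrow> 'a set \<Rightarrow> 'a set \<Rightarrow> 'a list set \<Rightarrow> bool" where
  "linkage E A B P \<longleftrightarrow>
     (\<forall>p\<in>P. path_between E A B p \<and> meets_only_at_ends A B p) \<and> disjoint_family_on set P"

lemma path_between_mono: "path_between E A B p \<Longrightarrow> E \<subseteq> E' \<Longrightarrow> path_between E' A B p"
  unfolding path_between_def using walk_mono by blast

lemma linkage_mono: "linkage E A B P \<Longrightarrow> E \<subseteq> E' \<Longrightarrow> linkage E' A B P"
  unfolding linkage_def using path_between_mono by blast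

lemma path_between_prefix:
  assumes "path_between E A B (u @ v # w)" "v \<in> X"
  shows "path_between E A X (u @ [v])"
proof -
  have "walk E (u @ [v])" using assms walk_prefix by (metis path_between_def)
  then show ?thesis using assms by (cases u) (auto simp: path_between_def)
qed

lemma path_between_suffix:
  "path_between E A B (u @ v # w) \<Longrightarrow> v \<in> X \<Longrightarrow> path_between E X B (v # w)"
  by (auto simp: path_between_def dest: walk_suffix)

lemma path_between_trim:
  assumes "path_between E A B p"
  obtains q where "path_between E A B q" "meets_only_at_ends A B q" "set q \<subseteq> set p"
proof -
  have "hd p \<in> A" "last p \<in> B" "p \<noteq> []"
    using assms by (auto simp: path_between_def walk_def)
  then obtain u a w where p: "p = u @ a # w" "a \<in> A" "\<forall>z\<in>set w. z \<notin> A"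
    using split_list_last_prop[of p "\<lambda>v. v \<in> A"] by (metis hd_in_set)
  then have aw: "path_between E A B (a # w)"
    using assms path_between_suffix by metis
  then have "last (a # w) \<in> B" by (simp add: path_between_def)
  then obtain u' b w' where aw_split: "a # w = u' @ b # w'" "b \<in> B" "\<forall>z\<in>set u'. z \<notin> B"
    using split_list_first_prop[of "a # w" "\<lambda>v. v \<in> B"] by (metis last_in_set list.distinct(1))
  let ?q = "u' @ [b]"
  have "path_between E A B ?q"
    using aw aw_split path_between_prefix by metis
  moreover have "hd ?q = a"
    using aw_split by (cases u') auto
  moreover have "set ?q \<subseteq> set (a # w)"
    using aw_split by auto
  moreover have "meets_only_at_ends A B ?q"
    unfolding meets_only_at_ends_def
  proof (intro conjI ballI impI)
    fix z assume "z \<in> set ?q" "z \<in> A"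
    then show "z = hd ?q" using \<open>set ?q \<subseteq> set (a # w)\<close> \<open>hd ?q = a\<close> p(3) by auto
  next
    fix z assume "z \<in> set ?q" "z \<in> B"
    then show "z = last ?q" using aw_split(3) by auto
  qed
  ultimately show thesis
    using that[of ?q] p(1) by auto
qed

lemma inj_on_disjoint_nonempty:
  "disjoint_family_on S I \<Longrightarrow> (\<And>i. i \<in> I \<Longrightarrow> S i \<noteq> {}) \<Longrightarrow> inj_on S I"
  by (force simp: inj_on_def disjoint_family_on_def)

lemma disjoint_family_on_image:
  assumes "disjoint_family_on (\<lambda>i. S (t i)) I"
  shows "disjoint_family_on S (t ` I)"
  unfolding disjoint_family_on_def
proof (intro ballI impI)
  fix a b assume "a \<in> t ` I" "b \<in> t ` I" "a \<noteq> b"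
  then obtain i j where "i \<in> I" "j \<in> I" "i \<noteq> j" "a = t i" "b = t j" by blast
  then show "S a \<inter> S b = {}" using assms by (simp add: disjoint_family_on_def)
qed

lemma linkage_of_disjoint_paths:
  assumes "\<forall>p\<in>Q. path_between E A B p" "disjoint_family_on set Q"
  shows "\<exists>P. card P = card Q \<and> linkage E A B P"
proof -
  obtain t where t: "\<And>p. p \<in> Q \<Longrightarrow>
      path_between E A B (t p) \<and> meets_only_at_ends A B (t p) \<and> set (t p) \<subseteq> set p"
    using assms(1) path_between_trim by metis
  have nonempty: "set (t p) \<noteq> {}" if "p \<in> Q" for p
    using t[OF that] by (auto simp: path_between_def walk_def)
  have disjoint: "disjoint_family_on (\<lambda>p. set (t p)) Q"
    using assms(2) t unfolding disjoint_family_on_def by blast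
  then have "inj_on (\<lambda>p. set (t p)) Q"
    using inj_on_disjoint_nonempty nonempty by blast
  then have "inj_on t Q" using inj_on_imageI2[of set t] by (simp add: comp_def)
  moreover have "disjoint_family_on set (t ` Q)"
    using disjoint by (rule disjoint_family_on_image)
  ultimately show ?thesis
    using t by (intro exI[of _ "t ` Q"]) (auto simp: card_image linkage_def)
qed

lemma path_between_append:
  assumes "path_between E A X p" "path_between E Y B q" "(last p, hd q) \<in> E" "set p \<inter> set q = {}"
  shows "path_between E A B (p @ q)"
proof -
  have "walk E (p @ q)" using assms walk_append by (metis path_between_def)
  moreover have "p \<noteq> []" "q \<noteq> []" using assms by (simp_all add: path_between_def walk_def)
  ultimately show ?thesis using assms by (simp add: path_between_def)
qed

lemma path_between_append_tl:
  assumes "path_between E A X p" "path_between E Y B (v # w)" "last p = v" "set p \<inter> set w = {}"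
  shows "path_between E A B (p @ w)"
proof -
  have "walk E (p @ w)" using assms walk_append_tl by (metis path_between_def)
  moreover have "p \<noteq> []" using assms by (simp add: path_between_def walk_def)
  moreover have "last (p @ w) = last (v # w)" using assms(3) \<open>p \<noteq> []\<close> by (cases w) auto
  ultimately show ?thesis using assms by (simp add: path_between_def)
qed

lemma separates_insert_edge_end:
  assumes "separates (E - {(x, y)}) A B S"
  shows "separates E A B (insert x S)" "separates E A B (insert y S)"
proof -
  have "set p \<inter> S \<noteq> {} \<or> x \<in> set p \<and> y \<in> set p" if p: "path_between E A B p" for p
  proof (cases "walk (E - {(x, y)}) p")
    case True
    then show ?thesis using assms p by (auto simp: separates_def path_between_def)
  next
    case False
    then show ?thesis
      using walk_uses_removed_edge p by (fastforce simp: path_between_def)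
  qed
  then show "separates E A B (insert x S)" "separates E A B (insert y S)"
    unfolding separates_def by blast+
qed

lemma separates_via_prefix:
  assumes "separates E A B X" "x \<in> X" "separates (E - {(x, y)}) A X T"
  shows "separates E A B T"
  unfolding separates_def
proof (intro allI impI)
  fix p assume p: "path_between E A B p"
  then have "\<exists>v\<in>set p. v \<in> X" using assms(1) by (auto simp: separates_def)
  then obtain u v w where uvw: "p = u @ v # w" "v \<in> X" "\<forall>z\<in>set u. z \<notin> X"
    using split_list_first_prop[of p "\<lambda>v. v \<in> X"] by blast
  let ?q = "u @ [v]"
  have q: "path_between E A X ?q"
    using p uvw path_between_prefix by metis
  have "walk (E - {(x, y)}) ?q"
  proof (rule ccontr)
    assume "\<not> walk (E - {(x, y)}) ?q"
    then obtain u1 w1 where "?q = u1 @ x # y # w1"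
      using walk_uses_removed_edge q by (metis path_between_def)
    then have "x \<in> set (butlast ?q)" by (simp add: butlast_append)
    then show False using uvw assms(2) by simp
  qed
  then have "path_between (E - {(x, y)}) A X ?q" using q by (simp add: path_between_def)
  then have "set ?q \<inter> T \<noteq> {}" using assms(3) unfolding separates_def by blast
  then show "set p \<inter> T \<noteq> {}" using uvw(1) by auto
qed

lemma separates_via_suffix:
  assumes "separates E A B X" "y \<in> X" "separates (E - {(x, y)}) X B T"
  shows "separates E A B T"
  unfolding separates_def
proof (intro allI impI)
  fix p assume p: "path_between E A B p"
  then have "\<exists>v\<in>set p. v \<in> X" using assms(1) by (auto simp: separates_def)
  then obtain u v w where uvw: "p = u @ v # w" "v \<in> X" "\<forall>z\<in>set w. z \<notin> X"
    using split_list_last_prop[of p "\<lambda>v. v \<in> X"] by blast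
  let ?q = "v # w"
  have q: "path_between E X B ?q"
    using p uvw path_between_suffix by metis
  have "walk (E - {(x, y)}) ?q"
  proof (rule ccontr)
    assume "\<not> walk (E - {(x, y)}) ?q"
    then obtain u1 w1 where "?q = u1 @ x # y # w1"
      using walk_uses_removed_edge q by (metis path_between_def)
    then have "y \<in> set (tl ?q)" by (cases u1) auto
    then show False using uvw assms(2) by simp
  qed
  then have "path_between (E - {(x, y)}) X B ?q" using q by (simp add: path_between_def)
  then have "set ?q \<inter> T \<noteq> {}" using assms(3) unfolding separates_def by blast
  then show "set p \<inter> T \<noteq> {}" using uvw(1) by auto
qed

section \<open>Menger's theorem\<close>

lemma linkage_crossing:
  assumes sep: "separates E A B S" and P1: "linkage E A X1 P1" and P2: "linkage E X2 B P2"
    and S: "S \<subseteq> X1" "S \<subseteq> X2" and p: "p1 \<in> P1" "p2 \<in> P2" "v \<in> set p1" "v \<in> set p2"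
  shows "v \<in> S \<and> v = last p1 \<and> v = hd p2"
proof -
  have p1: "path_between E A X1 p1" "meets_only_at_ends A X1 p1"
    and p2: "path_between E X2 B p2" "meets_only_at_ends X2 B p2"
    using P1 P2 p by (auto simp: linkage_def)
  have "v \<in> S"
  proof (rule ccontr)
    assume "v \<notin> S"
    obtain u1 w1 where p1_split: "p1 = u1 @ v # w1" using p(3) by (meson split_list)
    obtain u2 w2 where p2_split: "p2 = u2 @ v # w2" using p(4) by (meson split_list)
    let ?W = "u1 @ v # w2"
    have "walk E (u1 @ [v])" "walk E (v # w2)"
      using p1 p2 p1_split p2_split walk_prefix walk_suffix by (metis path_between_def)+
    then have "walk E ?W" using walk_append_tl by fastforce
    moreover have "hd ?W \<in> A" "last ?W \<in> B"
      using p1 p2 p1_split p2_split by (cases u1; auto simp: path_between_def)+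
    moreover have "set u1 \<inter> S = {}"
    proof -
      have "z = last p1" if "z \<in> set u1" "z \<in> S" for z
        using p1(2) S(1) that p1_split by (auto simp: meets_only_at_ends_def)
      moreover have "last p1 \<notin> set u1"
        using p1(1) p1_split by (cases w1) (auto simp: path_between_def)
      ultimately show ?thesis using p1_split by auto
    qed
    moreover have "set w2 \<inter> S = {}"
    proof -
      have "z = hd p2" if "z \<in> set w2" "z \<in> S" for z
        using p2(2) S(2) that p2_split by (auto simp: meets_only_at_ends_def)
      then show ?thesis using p2(1) p2_split by (cases u2) (auto simp: path_between_def)
    qed
    ultimately obtain q where "path_between E A B q" "set q \<inter> S = {}"
      using walk_contains_path[of E ?W] \<open>v \<notin> S\<close> unfolding path_between_def by fastforce
    then show False using sep by (auto simp: separates_def)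
  qed
  then show ?thesis
    using p1(2) p2(2) S p by (auto simp: meets_only_at_ends_def)
qed

lemma linkage_bij_betw:
  assumes "linkage E A B P" "finite X" "card P = card X" "\<And>p. p \<in> P \<Longrightarrow> g p \<in> set p \<inter> X"
  shows "bij_betw g P X"
proof -
  have "inj_on g P"
  proof (rule inj_onI)
    fix p q assume "p \<in> P" "q \<in> P" "g p = g q"
    then have "g p \<in> set p \<inter> set q" using assms(4) by force
    then show "p = q"
      using assms(1) \<open>p \<in> P\<close> \<open>q \<in> P\<close> by (auto simp: linkage_def disjoint_family_on_def)
  qed
  moreover have "g ` P \<subseteq> X" using assms(4) by blast
  ultimately show ?thesis
    using assms(2,3) card_image card_subset_eq unfolding bij_betw_def by metis
qed

lemma linkage_the_inv_into_last:
  assumes "linkage E A B P" "finite B" "card P = card B" "v \<in> B"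
  shows "the_inv_into P last v \<in> P" "last (the_inv_into P last v) = v"
proof -
  have "bij_betw last P B"
    using assms(1) by (intro linkage_bij_betw[OF assms(1-3)]) (auto simp: linkage_def path_between_def walk_def)
  then show "the_inv_into P last v \<in> P" "last (the_inv_into P last v) = v"
    using assms(4) bij_betw_the_inv_into bij_betwE f_the_inv_into_f_bij_betw by metis+
qed

lemma linkage_the_inv_into_hd:
  assumes "linkage E A B P" "finite A" "card P = card A" "v \<in> A"
  shows "the_inv_into P hd v \<in> P" "hd (the_inv_into P hd v) = v"
proof -
  have "bij_betw hd P A"
    using assms(1) by (intro linkage_bij_betw[OF assms(1-3)]) (auto simp: linkage_def path_between_def walk_def)
  then show "the_inv_into P hd v \<in> P" "hd (the_inv_into P hd v) = v"
    using assms(4) bij_betw_the_inv_into bij_betwE f_the_inv_into_f_bij_betw by metis+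
qed

lemma linkage_glue:
  assumes sep: "separates E A B S" and fin: "finite S"
    and xy: "x \<notin> S" "y \<notin> S"
    and P1: "linkage E A (insert x S) P1" "card P1 = card (insert x S)"
    and P2: "linkage E (insert y S) B P2" "card P2 = card (insert y S)"
  shows "\<exists>Q. card Q = card (insert x S) \<and> (\<forall>q\<in>Q. path_between (insert (x, y) E) A B q)
    \<and> disjoint_family_on set Q"
proof -
  let ?E = "insert (x, y) E"
  let ?X1 = "insert x S" and ?X2 = "insert y S"
  have path1: "path_between E A ?X1 p" "distinct p" if "p \<in> P1" for p
    using P1(1) that by (auto simp: linkage_def path_between_def)
  have path2: "path_between E ?X2 B p" "distinct p" if "p \<in> P2" for p
    using P2(1) that by (auto simp: linkage_def path_between_def)
  define from_A where "from_A = the_inv_into P1 last"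
  define to_B where "to_B v = the_inv_into P2 hd (if v = x then y else v)" for v
  have from_A: "from_A v \<in> P1" "last (from_A v) = v" if "v \<in> ?X1" for v
    using linkage_the_inv_into_last[OF P1(1) finite.insertI[OF fin] P1(2) that] by (simp_all add: from_A_def)
  have to_B: "to_B v \<in> P2" "hd (to_B v) = (if v = x then y else v)" if "v \<in> ?X1" for v
    using linkage_the_inv_into_hd[OF P2(1) finite.insertI[OF fin] P2(2), of "if v = x then y else v"] that
    by (auto simp: to_B_def)
  have meet: "z \<in> S \<and> z = last p1 \<and> z = hd p2" if "p1 \<in> P1" "p2 \<in> P2" "z \<in> set p1" "z \<in> set p2"
    for p1 p2 z
    using linkage_crossing[OF sep P1(1) P2(1)] that by blast
  \<comment> \<open>the path into x continues across the deleted edge (x, y), the others from their endpoint in S\<close>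
  define link where "link v = (if v = x then from_A v @ to_B v else from_A v @ tl (to_B v))" for v
  have lift: "path_between ?E C D p" if "path_between E C D p" for C D p
    using path_between_mono that by blast
  have link_path: "path_between ?E A B (link v)" if v: "v \<in> ?X1" for v
  proof (cases "v = x")
    case True
    have "set (from_A x) \<inter> set (to_B x) = {}"
      using meet from_A to_B xy by fastforce
    then show ?thesis
      using path_between_append[of ?E A ?X1 "from_A x" ?X2 B "to_B x"] lift path1 path2 from_A to_B True
      by (simp add: link_def)
  next
    case False
    then have to_B_v: "to_B v = v # tl (to_B v)"
      using to_B[OF v] path2 by (metis hd_Cons_tl path_between_def walk_def)
    then have "v \<notin> set (tl (to_B v))"
      using path2 to_B[OF v] by (metis distinct.simps(2))
    then have "set (from_A v) \<inter> set (tl (to_B v)) = {}"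
      using meet from_A[OF v] to_B[OF v] False by (metis disjoint_iff list.set_sel(2) tl_Nil)
    then show ?thesis
      using path_between_append_tl[of ?E A ?X1 "from_A v" ?X2 B v "tl (to_B v)"]
        lift path1 path2 from_A[OF v] to_B[OF v] to_B_v False
      by (simp add: link_def)
  qed
  have link_set: "set (link v) \<subseteq> set (from_A v) \<union> set (to_B v)" for v
    by (cases "to_B v") (auto simp: link_def)
  have crossing_same: "a = b"
    if "a \<in> ?X1" "b \<in> ?X1" "z \<in> set (from_A a)" "z \<in> set (to_B b)" for a b z
    using meet[OF from_A(1) to_B(1)] from_A to_B that xy by (metis insert_iff)
  have "disjoint_family_on (\<lambda>v. set (link v)) ?X1"
    unfolding disjoint_family_on_def
  proof (intro ballI impI)
    fix a b assume ab: "a \<in> ?X1" "b \<in> ?X1" "a \<noteq> b"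
    then have "set (from_A a) \<inter> set (from_A b) = {}"
      using P1(1) from_A by (metis linkage_def disjoint_family_onD)
    moreover have "set (to_B a) \<inter> set (to_B b) = {}"
    proof -
      have "hd (to_B a) \<noteq> hd (to_B b)" using ab to_B xy by auto
      then show ?thesis using P2(1) to_B ab by (metis linkage_def disjoint_family_onD)
    qed
    ultimately show "set (link a) \<inter> set (link b) = {}"
      using link_set[of a] link_set[of b] crossing_same ab by blast
  qed
  moreover have "set (link v) \<noteq> {}" if "v \<in> ?X1" for v
    using link_path[OF that] unfolding path_between_def walk_def by simp
  ultimately have "inj_on (\<lambda>v. set (link v)) ?X1"
    by (rule inj_on_disjoint_nonempty)
  then have "inj_on link ?X1"
    by (auto simp: inj_on_def)
  then have "card (link ` ?X1) = card ?X1"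
    by (rule card_image)
  moreover have "disjoint_family_on set (link ` ?X1)"
    using \<open>disjoint_family_on (\<lambda>v. set (link v)) ?X1\<close> by (rule disjoint_family_on_image)
  ultimately show ?thesis
    using link_path by (intro exI[of _ "link ` ?X1"]) auto
qed

lemma walk_no_edges: "walk {} p \<longleftrightarrow> (\<exists>v. p = [v])"
  by (cases p rule: remdups_adj.cases) (auto simp: walk_def)

lemma separates_no_edges: "separates {} A B (A \<inter> B)"
  by (auto simp: separates_def path_between_def walk_no_edges)

lemma linkage_singletons: "T \<subseteq> A \<inter> B \<Longrightarrow> linkage E A B ((\<lambda>v. [v]) ` T)"
  by (auto simp: linkage_def path_between_def walk_def meets_only_at_ends_def disjoint_family_on_def)

lemma menger_no_edges:
  assumes "finite A" "\<And>S. finite S \<Longrightarrow> separates {} A B S \<Longrightarrow> k \<le> card S"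
  shows "\<exists>P. card P = k \<and> linkage E A B P"
proof -
  have "k \<le> card (A \<inter> B)"
    using assms separates_no_edges by blast
  then obtain T where "T \<subseteq> A \<inter> B" "card T = k"
    by (meson obtain_subset_with_card_n)
  moreover have "inj_on (\<lambda>v. [v]) T" by (simp add: inj_on_def)
  ultimately show ?thesis
    using linkage_singletons by (intro exI[of _ "(\<lambda>v. [v]) ` T"]) (simp add: card_image)
qed

theorem menger:
  assumes "finite E" "finite A" "\<And>S. finite S \<Longrightarrow> separates E A B S \<Longrightarrow> k \<le> card S"
  shows "\<exists>P. card P = k \<and> linkage E A B P"
  using assms
proof (induction E arbitrary: A B k rule: finite_psubset_induct)
  case (psubset E)
  show ?case
  proof (cases "E = {}")
    case True
    then show ?thesis using psubset.prems menger_no_edges by blast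
  next
    case False
    then obtain x y where "(x, y) \<in> E" by auto
    define E' where "E' = E - {(x, y)}"
    have E: "E = insert (x, y) E'" and E'_less: "E' \<subset> E"
      using \<open>(x, y) \<in> E\<close> unfolding E'_def by blast+
    show ?thesis
    proof (cases "\<forall>S. finite S \<longrightarrow> separates E' A B S \<longrightarrow> k \<le> card S")
      case True
      have "\<exists>P. card P = k \<and> linkage E' A B P"
        by (rule psubset.IH[OF E'_less psubset.prems(1)]) (use True in blast)
      then show ?thesis
        using linkage_mono E'_less by blast
    next
      case False
      then obtain S where S: "finite S" "separates E' A B S" "card S < k"
        by (auto simp: not_le)
      let ?X1 = "insert x S" and ?X2 = "insert y S"
      have sep: "separates E A B ?X1" "separates E A B ?X2"
        using separates_insert_edge_end S(2) by (auto simp: E'_def)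
      then have "k \<le> card ?X1" "k \<le> card ?X2"
        using psubset.prems(2) S(1) by simp_all
      then have xy: "x \<notin> S" "y \<notin> S" and card_X: "card ?X1 = k" "card ?X2 = k"
        using S by (auto simp: card_insert_if split: if_splits)
      have "k \<le> card T" if "finite T" "separates E' A ?X1 T" for T
        using that separates_via_prefix[OF sep(1), of x y T] psubset.prems(2) by (simp add: E'_def)
      then obtain P1 where P1: "card P1 = k" "linkage E' A ?X1 P1"
        using psubset.IH[OF E'_less psubset.prems(1)] by meson
      have "k \<le> card T" if "finite T" "separates E' ?X2 B T" for T
        using that separates_via_suffix[OF sep(2), of y x T] psubset.prems(2) by (simp add: E'_def)
      then obtain P2 where P2: "card P2 = k" "linkage E' ?X2 B P2"
        using psubset.IH[OF E'_less, of ?X2] S(1) by blast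
      obtain Q where "card Q = k" "\<forall>q\<in>Q. path_between E A B q" "disjoint_family_on set Q"
        using linkage_glue[OF S(2,1) xy P1(2) _ P2(2)] P1(1) P2(1) card_X E by metis
      then show ?thesis
        using linkage_of_disjoint_paths by metis
    qed
  qed
qed

section \<open>Fans\<close>

definition fan :: "'a set \<Rightarrow> ('a \<times> 'a) set \<Rightarrow> nat \<Rightarrow> 'a set \<Rightarrow> 'a set \<Rightarrow> 'a \<Rightarrow> bool" where
  "fan V E f F X y \<longleftrightarrow> (\<exists>P. finite P \<and> f + 1 \<le> card P \<and>
     (\<forall>ps\<in>P. Xy_path V E X y ps \<and> set ps \<inter> F = {}) \<and>
     (\<forall>p\<in>P. \<forall>q\<in>P. p \<noteq> q \<longrightarrow> set p \<inter> set q = {y}))"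

lemma reaches_iff_fan: "reaches V E f F X Y \<longleftrightarrow> (\<forall>y\<in>Y. fan V E f F X y)"
  by (auto simp: reaches_def fan_def)

lemma dpath_iff_walk: "dpath V E ps \<longleftrightarrow> walk E ps \<and> distinct ps \<and> set ps \<subseteq> V"
  by (auto simp: dpath_def walk_def successively_conv_nth)

lemma fan_avoids_small_set:
  assumes "fan V E f F X y" "finite T" "card T \<le> f" "y \<notin> T"
  obtains ps where "Xy_path V E X y ps" "set ps \<inter> F = {}" "set ps \<inter> T = {}"
proof -
  obtain P where P: "finite P" "f + 1 \<le> card P" "\<forall>ps\<in>P. Xy_path V E X y ps \<and> set ps \<inter> F = {}"
    "\<forall>p\<in>P. \<forall>q\<in>P. p \<noteq> q \<longrightarrow> set p \<inter> set q = {y}"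
    using assms(1) by (auto simp: fan_def)
  have "\<exists>ps\<in>P. set ps \<inter> T = {}"
  proof (rule ccontr)
    assume "\<not> (\<exists>ps\<in>P. set ps \<inter> T = {})"
    then have "\<forall>p\<in>P. \<exists>z. z \<in> set p \<inter> T" by blast
    then obtain s where s: "\<forall>p\<in>P. s p \<in> set p \<inter> T" by metis
    \<comment> \<open>pigeonhole: two paths of the fan share only y, which is not in T\<close>
    have "inj_on s P"
    proof (rule inj_onI)
      fix p q assume pq: "p \<in> P" "q \<in> P" "s p = s q"
      show "p = q"
      proof (rule ccontr)
        assume "p \<noteq> q"
        then have "set p \<inter> set q = {y}" using P(4) pq by blast
        moreover have "s p \<in> set p \<inter> set q" "s p \<in> T" using s pq by auto
        ultimately show False using assms(4) by auto
      qed
    qed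
    moreover have "s ` P \<subseteq> T" using s by blast
    ultimately have "card P \<le> card T"
      using card_inj_on_le assms(2) by blast
    then show False using P(2) assms(3) by simp
  qed
  then show thesis using that P(3) by blast
qed

lemma walk_through_fans:
  assumes fan_B: "\<And>b. b \<in> B \<Longrightarrow> fan V E f F A b" and fan_c: "fan V E f F (A \<union> B) c"
    and S: "finite S" "card S \<le> f"
  shows "\<exists>W. walk E W \<and> hd W \<in> A \<and> last W = c \<and> set W \<inter> F = {} \<and> set W \<inter> S \<subseteq> {c}"
proof -
  have "finite (S - {c})" "card (S - {c}) \<le> f"
    using S by (auto intro: le_trans[OF card_Diff1_le])
  then obtain ps where ps: "Xy_path V E (A \<union> B) c ps" "set ps \<inter> F = {}" "set ps \<inter> (S - {c}) = {}"
    using fan_avoids_small_set[OF fan_c] by blast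
  then have ps_walk: "walk E ps" "hd ps \<in> A \<union> B" "last ps = c" "c \<notin> A \<union> B"
    by (auto simp: Xy_path_def dpath_iff_walk)
  show ?thesis
  proof (cases "\<exists>a\<in>set ps. a \<in> A")
    case True
    then obtain u a w where "ps = u @ a # w" "a \<in> A" by (metis split_list)
    then show ?thesis
      using ps ps_walk walk_suffix[of E u a w] by (intro exI[of _ "a # w"]) auto
  next
    case False
    then obtain b w where ps_eq: "ps = b # w" and "b \<in> B"
      using ps_walk by (cases ps) (auto simp: walk_def)
    then have "b \<noteq> c" "b \<notin> S" "w \<noteq> []"
      using ps(3) ps_walk(3,4) by auto
    then obtain q where q: "Xy_path V E A b q" "set q \<inter> F = {}" "set q \<inter> S = {}"
      using fan_avoids_small_set[OF fan_B[OF \<open>b \<in> B\<close>] S] by blast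
    then have q_walk: "walk E q" "hd q \<in> A" "last q = b" "q \<noteq> []"
      by (simp_all add: Xy_path_def dpath_iff_walk walk_def)
    have "walk E (q @ w)"
      using walk_append_tl[OF q_walk(1) _ q_walk(3)] ps_walk(1) ps_eq by simp
    moreover have "hd (q @ w) \<in> A" "last (q @ w) = c"
      using q_walk ps_walk(3) ps_eq \<open>w \<noteq> []\<close> by simp_all
    ultimately show ?thesis
      using q ps ps_eq by (intro exI[of _ "q @ w"]) auto
  qed
qed

lemma separator_to_in_neighbours_large:
  assumes y: "y \<notin> A"
    and walks: "\<And>S. finite S \<Longrightarrow> card S \<le> f \<Longrightarrow>
      \<exists>W. walk E W \<and> hd W \<in> A \<and> last W = y \<and> set W \<inter> F = {} \<and> set W \<inter> S \<subseteq> {y}"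
    and S: "finite S" "separates (E \<inter> (- insert y F) \<times> (- insert y F)) A {v. (v, y) \<in> E} S"
  shows "f + 1 \<le> card S"
proof (rule ccontr)
  let ?E' = "E \<inter> (- insert y F) \<times> (- insert y F)"
  assume "\<not> f + 1 \<le> card S"
  then have "card S \<le> f" by simp
  then obtain W where W: "walk E W" "hd W \<in> A" "last W = y" "set W \<inter> F = {}" "set W \<inter> S \<subseteq> {y}"
    using walks S(1) by blast
  have "W \<noteq> []" using W(1) by (simp add: walk_def)
  then have "y \<in> set W" using W(3) by (metis last_in_set)
  then obtain u w where W_eq: "W = u @ y # w" "y \<notin> set u" by (meson split_list_first)
  then have "u \<noteq> []" using W(2) y by auto
  have "walk E (u @ [y])" using walk_prefix W(1) W_eq(1) by metis
  then have u_walk: "walk E u" "(last u, y) \<in> E"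
    using \<open>u \<noteq> []\<close> by (simp_all add: walk_def successively_append_iff)
  have "walk ?E' u"
    using u_walk(1) W(4) W_eq unfolding walk_def by (auto elim!: successively_mono)
  then obtain q where "walk ?E' q" "distinct q" "hd q = hd u" "last q = last u" "set q \<subseteq> set u"
    using walk_contains_path by blast
  then have "path_between ?E' A {v. (v, y) \<in> E} q" "set q \<inter> S = {}"
    using W W_eq \<open>u \<noteq> []\<close> u_walk(2) by (auto simp: path_between_def)
  then show False using S(2) by (auto simp: separates_def)
qed

lemma fan_of_linkage_to_in_neighbours:
  assumes V: "E \<subseteq> V \<times> V" and A: "A \<subseteq> V" "A \<inter> F = {}" and y: "y \<in> V" "y \<notin> A" "y \<notin> F"
    and P: "card P = f + 1" "linkage (E \<inter> (- insert y F) \<times> (- insert y F)) A {v. (v, y) \<in> E} P"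
  shows "fan V E f F A y"
proof -
  let ?E' = "E \<inter> (- insert y F) \<times> (- insert y F)"
  have vertices: "set p \<subseteq> V - F - {y}" if "p \<in> P" for p
  proof -
    have "walk ?E' p" "hd p \<in> A" using P(2) that by (auto simp: linkage_def path_between_def)
    moreover have "snd ` ?E' \<subseteq> V - F - {y}" using V by auto
    ultimately show ?thesis using walk_set_subset[of ?E' p] A y by blast
  qed
  have path: "Xy_path V E A y (p @ [y]) \<and> set (p @ [y]) \<inter> F = {}" if "p \<in> P" for p
  proof -
    have p: "path_between ?E' A {v. (v, y) \<in> E} p" using P(2) that by (simp add: linkage_def)
    then have "walk E p" "(last p, y) \<in> E" "p \<noteq> []"
      using walk_mono[of ?E' p E] by (auto simp: path_between_def walk_def)
    then have "walk E (p @ [y])"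
      using walk_append[of E p "[y]"] by (simp add: walk_def)
    moreover have "distinct (p @ [y])" "set (p @ [y]) \<subseteq> V" "set (p @ [y]) \<inter> F = {}"
      using p vertices[OF that] y by (auto simp: path_between_def)
    moreover have "hd (p @ [y]) \<in> A"
      using p \<open>p \<noteq> []\<close> by (simp add: path_between_def)
    ultimately show ?thesis
      using y(2) by (simp add: Xy_path_def dpath_iff_walk)
  qed
  have "inj_on (\<lambda>p. p @ [y]) P" by (simp add: inj_on_def)
  then have "card ((\<lambda>p. p @ [y]) ` P) = f + 1" using P(1) by (simp add: card_image)
  moreover have "finite P" using P(1) by (intro card_ge_0_finite) simp
  moreover have "set (p @ [y]) \<inter> set (q @ [y]) = {y}" if "p \<in> P" "q \<in> P" "p \<noteq> q" for p q
  proof -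
    have "set p \<inter> set q = {}" using P(2) that by (auto simp: linkage_def dest: disjoint_family_onD)
    then show ?thesis using vertices[OF that(1)] vertices[OF that(2)] by auto
  qed
  ultimately show ?thesis
    unfolding fan_def using path by (intro exI[of _ "(\<lambda>p. p @ [y]) ` P"]) auto
qed

lemma fan_of_walks:
  assumes V: "finite V" "E \<subseteq> V \<times> V" and A: "A \<subseteq> V" "A \<inter> F = {}" and y: "y \<in> V" "y \<notin> A" "y \<notin> F"
    and walks: "\<And>S. finite S \<Longrightarrow> card S \<le> f \<Longrightarrow>
      \<exists>W. walk E W \<and> hd W \<in> A \<and> last W = y \<and> set W \<inter> F = {} \<and> set W \<inter> S \<subseteq> {y}"
  shows "fan V E f F A y"
proof -
  have "finite (E \<inter> (- insert y F) \<times> (- insert y F))"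
    by (rule finite_subset[of _ "V \<times> V"]) (use V in auto)
  moreover have "finite A"
    using V(1) A(1) finite_subset by blast
  ultimately obtain P
    where "card P = f + 1" "linkage (E \<inter> (- insert y F) \<times> (- insert y F)) A {v. (v, y) \<in> E} P"
    using menger[OF _ _ separator_to_in_neighbours_large[OF y(2) walks]] by blast
  then show ?thesis
    by (rule fan_of_linkage_to_in_neighbours[OF V(2) A y])
qed

theorem lemma8:
  fixes V :: "'a set" and E :: "('a \<times> 'a) set" and f :: nat
    and A B C F :: "'a set"
  assumes graph: "simple_digraph V E"
    and cond: "\<And>X Y Z. X \<union> Y \<union> Z = V \<Longrightarrow> X \<inter> Y = {} \<Longrightarrow> X \<inter> Z = {} \<Longrightarrow> Y \<inter> Z = {}
        \<Longrightarrow> X \<noteq> {} \<Longrightarrow> Y \<noteq> {} \<Longrightarrow> card Z \<le> f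
        \<Longrightarrow> reaches V E f Z X Y \<or> reaches V E f Z Y X"
    and subs: "A \<subseteq> V" "B \<subseteq> V" "C \<subseteq> V" "F \<subseteq> V"
    and disj: "A \<inter> B = {}" "A \<inter> C = {}" "A \<inter> F = {}" "B \<inter> C = {}" "B \<inter> F = {}" "C \<inter> F = {}"
    and cardF: "card F \<le> f"
    and ne: "A \<noteq> {}" "B \<noteq> {}" "C \<noteq> {}"
    and AB: "reaches V E f F A B"
    and ABC: "reaches V E f F (A \<union> B) C"
  shows "reaches V E f F A (B \<union> C)"
proof -
  have V: "finite V" "E \<subseteq> V \<times> V" using graph by (auto simp: simple_digraph_def)
  have fan_B: "fan V E f F A b" if "b \<in> B" for b
    using AB that by (simp add: reaches_iff_fan)
  have "fan V E f F A c" if c: "c \<in> C" for c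
  proof (rule fan_of_walks[OF V subs(1) disj(3)])
    show "c \<in> V" "c \<notin> A" "c \<notin> F" using c subs disj by auto
    have "fan V E f F (A \<union> B) c" using ABC c by (simp add: reaches_iff_fan)
    then show "\<exists>W. walk E W \<and> hd W \<in> A \<and> last W = c \<and> set W \<inter> F = {} \<and> set W \<inter> S \<subseteq> {c}"
      if "finite S" "card S \<le> f" for S
      using walk_through_fans[OF fan_B] that by blast
  qed
  then show ?thesis using AB by (auto simp: reaches_iff_fan)
qed

end
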